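(* Let $\mathcal{P}$ be a probability distribution on $\mathcal{X}\times\mathbb{R}$, let $\mathsf{m}:\mathcal{X}\to\mathbb{R}$ and $\widehat{\mathsf{v}}:\mathcal{X}\to[0,\infty)$ be fixed measurable functions (e.g. built from a training set independent of the data below), and for $\delta\in[-1,\infty)$ let $\widehat{\mathsf{PI}}(x,\delta):=\big[\mathsf{m}(x)-\sqrt{(1+\delta)\widehat{\mathsf{v}}(x)},\ \mathsf{m}(x)+\sqrt{(1+\delta)\widehat{\mathsf{v}}(x)}\big]$. Let $g(\delta):=\mathbb{P}_{(\mathbf{x},\mathbf{y})\sim\mathcal{P}}[\mathbf{y}\notin\widehat{\mathsf{PI}}(\mathbf{x},\delta)]$. Suppose there are constants $\Delta,L>0$ with $g(\Delta)=0$ and $g$ differentiable on $[-1,\Delta]$ with $|g'(\delta)|<L$ there. Let $\alpha\in(0,1)$ and let $(x'_1,y'_1),\dots,(x'_m,y'_m)$ be i.i.d. from $\mathcal{P}$. Consider the procedure: initialize $\delta=-1$; while $\frac{1}{m}\sum_{j=1}^m\mathbb{1}[y'_j\notin\widehat{\mathsf{PI}}(x'_j,\delta)]>\frac34\alpha$, update $\delta\leftarrow\frac{\delta+\Delta}{2}$; return $\delta^\star(\alpha):=\delta$. If $$\sqrt{\frac{\log\big(\lceil\log_2(\tfrac{2L(\Delta+1)}{\alpha})\rceil+1\big)+10\log m}{m}}\le\frac14\alpha,$$ then with probability at least $1-2m^{-10}$ over $\{(x'_j,y'_j)\}_{j=1}^m$, $$\mathbb{P}_{(\mathbf{x},\mathbf{y})\sim\mathcal{P}}\big[\mathbf{y}\in\widehat{\mathsf{PI}}(\mathbf{x},\delta^\star(\alpha))\big]\ge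 1-\alpha.$$
   Context: The probability over $(\mathbf{x},\mathbf{y})$ is over a fresh draw independent of the calibration set, with $\mathsf{m}$ and $\widehat{\mathsf{v}}$ held fixed. *)

theory Defs
  imports "HOL-Probability.Probability"
begin

definition PI :: "('a \<Rightarrow> real) \<Rightarrow> ('a \<Rightarrow> real) \<Rightarrow> 'a \<Rightarrow> real \<Rightarrow> real set" where
  "PI mu v x \<delta> = {mu x - sqrt ((1 + \<delta>) * v x) .. mu x + sqrt ((1 + \<delta>) * v x)}"

definition miscov :: "('a \<times> real) measure \<Rightarrow> ('a \<Rightarrow> real) \<Rightarrow> ('a \<Rightarrow> real) \<Rightarrow> real \<Rightarrow> real" where
  "miscov M mu v \<delta> = measure M {p \<in> space M. snd p \<notin> PI mu v (fst p) \<delta>}"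

definition emp_miscov :: "('a \<Rightarrow> real) \<Rightarrow> ('a \<Rightarrow> real) \<Rightarrow> nat \<Rightarrow> (nat \<Rightarrow> 'a \<times> real) \<Rightarrow> real \<Rightarrow> real" where
  "emp_miscov mu v n \<omega> \<delta> =
     (\<Sum>j<n. if snd (\<omega> j) \<notin> PI mu v (fst (\<omega> j)) \<delta> then 1 else 0) / real n"

fun bisect_seq :: "real \<Rightarrow> nat \<Rightarrow> real" where
  "bisect_seq \<Delta> 0 = -1"
| "bisect_seq \<Delta> (Suc k) = (bisect_seq \<Delta> k + \<Delta>) / 2"

definition procedure_returns ::
  "('a \<Rightarrow> real) \<Rightarrow> ('a \<Rightarrow> real) \<Rightarrow> real \<Rightarrow> real \<Rightarrow> nat \<Rightarrow> (nat \<Rightarrow> 'a \<times> real) \<Rightarrow> real \<Rightarrow> bool" where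
  "procedure_returns mu v \<Delta> \<alpha> n \<omega> d \<longleftrightarrow>
     (\<exists>k. d = bisect_seq \<Delta> k
        \<and> emp_miscov mu v n \<omega> (bisect_seq \<Delta> k) \<le> 3 / 4 * \<alpha>
        \<and> (\<forall>i<k. emp_miscov mu v n \<omega> (bisect_seq \<Delta> i) > 3 / 4 * \<alpha>))"

end

theory Submission
  imports Defs
begin

text \<open>
  The iterates \<open>\<delta>\<^sub>k = \<Delta> - (\<Delta> + 1) / 2 ^ k\<close> approach the root \<open>\<Delta>\<close> of the miscoverage \<open>g\<close>, so
  the Lipschitz bound gives \<open>g \<delta>\<^sub>K \<le> \<alpha> / 2\<close> after \<open>K = \<lceil>log\<^sub>2 (2 L (\<Delta> + 1) / \<alpha>)\<rceil>\<close> steps.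
  By Hoeffding's inequality and a union bound over the \<open>K + 1\<close> grid points, with probability at
  least \<open>1 - 2 / n ^ 10\<close> every empirical miscoverage on the grid is within \<open>\<alpha> / 4\<close> of \<open>g\<close>.
  On that event the loop stops at some \<open>k \<le> K\<close> (the empirical value at \<open>\<delta>\<^sub>K\<close> is below
  \<open>3 \<alpha> / 4\<close>), and at the stopping point \<open>g \<delta>\<^sub>k \<le> 3 \<alpha> / 4 + \<alpha> / 4\<close>.
\<close>

lemma indep_vars_PiM_components:
  assumes "finite I" "I \<noteq> {}" "\<And>i. i \<in> I \<Longrightarrow> prob_space (M i)"
  shows "prob_space.indep_vars (PiM I M) M (\<lambda>i \<omega>. \<omega> i) I"
proof -
  interpret P: prob_space "PiM I M" by (rule prob_space_PiM) (use assms(3) in simp)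
  show ?thesis
  proof (subst P.indep_vars_iff_distr_eq_PiM'[OF assms(2)])
    have "distr (PiM I M) (PiM I M) (\<lambda>x. \<lambda>i\<in>I. x i) = distr (PiM I M) (PiM I M) (\<lambda>x. x)"
      by (intro distr_cong) (auto simp: space_PiM)
    also have "\<dots> = PiM I (\<lambda>i. distr (PiM I M) (M i) (\<lambda>\<omega>. \<omega> i))"
      using assms(3) by (simp add: distr_PiM_component cong: PiM_cong)
    finally show "distr (PiM I M) (PiM I M) (\<lambda>x. \<lambda>i\<in>I. x i) = PiM I (\<lambda>i. distr (PiM I M) (M i) (\<lambda>\<omega>. \<omega> i))" .
  qed simp
qed

lemma hoeffding_PiM_mean:
  fixes f :: "'a \<Rightarrow> real"
  assumes "prob_space M" "n \<ge> 1" "f \<in> borel_measurable M" "\<forall>x\<in>space M. f x \<in> {a..b}" "a < b" "\<epsilon> \<ge> 0"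
  shows "measure (PiM {..<n} (\<lambda>_. M))
           {\<omega> \<in> space (PiM {..<n} (\<lambda>_. M)). \<epsilon> \<le> \<bar>(\<Sum>i<n. f (\<omega> i)) / real n - integral\<^sup>L M f\<bar>}
         \<le> 2 * exp (- 2 * real n * \<epsilon>\<^sup>2 / (b - a)\<^sup>2)"
proof -
  let ?P = "PiM {..<n} (\<lambda>_. M)"
  interpret M: prob_space M by fact
  interpret P: prob_space ?P by (rule prob_space_PiM) (simp add: M.prob_space_axioms)
  have nonempty: "{..<n} \<noteq> {}" using assms(2) by (auto simp: lessThan_empty_iff)
  have indep: "P.indep_vars (\<lambda>_. borel) (\<lambda>i \<omega>. f (\<omega> i)) {..<n}"
    by (rule P.indep_vars_compose2[OF indep_vars_PiM_components[OF _ nonempty]])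
       (use assms(1,3) in auto)
  have expectation: "P.expectation (\<lambda>\<omega>. f (\<omega> i)) = integral\<^sup>L M f" if "i < n" for i
    using integral_distr[of "\<lambda>\<omega>. \<omega> i" ?P M f] distr_PiM_component[of "{..<n}" "\<lambda>_. M" i] that assms(1,3)
    by simp
  interpret H: Hoeffding_ineq ?P "{..<n}" "\<lambda>i \<omega>. f (\<omega> i)" "\<lambda>_. a" "\<lambda>_. b"
      "\<Sum>i<n. P.expectation (\<lambda>\<omega>. f (\<omega> i))"
  proof unfold_locales
    show "AE \<omega> in ?P. f (\<omega> i) \<in> {a..b}" if "i \<in> {..<n}" for i
      using assms(4) that by (intro AE_I2) (auto simp: space_PiM)
  qed (use indep in auto)
  have deviation_scaled: "\<epsilon> \<le> \<bar>S / real n - integral\<^sup>L M f\<bar>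
      \<longleftrightarrow> real n * \<epsilon> \<le> \<bar>S - (\<Sum>i<n. P.expectation (\<lambda>\<omega>. f (\<omega> i)))\<bar>" for S
  proof -
    have "S / real n - integral\<^sup>L M f = (S - real n * integral\<^sup>L M f) / real n"
      using assms(2) by (simp add: field_simps)
    then show ?thesis
      using assms(2) by (simp add: expectation abs_divide pos_le_divide_eq mult.commute)
  qed
  have "{\<omega> \<in> space ?P. \<epsilon> \<le> \<bar>(\<Sum>i<n. f (\<omega> i)) / real n - integral\<^sup>L M f\<bar>}
      = {\<omega> \<in> space ?P. real n * \<epsilon> \<le> \<bar>(\<Sum>i<n. f (\<omega> i)) - (\<Sum>i<n. P.expectation (\<lambda>\<omega>. f (\<omega> i)))\<bar>}"
    by (simp only: deviation_scaled)
  also have "P.prob \<dots> \<le> 2 * exp (- 2 * (real n * \<epsilon>)\<^sup>2 / (real n * (b - a)\<^sup>2))"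
    using H.Hoeffding_ineq_abs_ge[of "real n * \<epsilon>"] assms(2,5,6) by simp
  also have "- 2 * (real n * \<epsilon>)\<^sup>2 / (real n * (b - a)\<^sup>2) = - 2 * real n * \<epsilon>\<^sup>2 / (b - a)\<^sup>2"
    using assms(2) by (simp add: power2_eq_square)
  finally show ?thesis .
qed

lemma deriv_bound_le_dist_to_root:
  fixes g :: "real \<Rightarrow> real"
  assumes "\<forall>t\<in>{a..b}. \<exists>D. (g has_real_derivative D) (at t within {a..b}) \<and> \<bar>D\<bar> < L"
    and "g b = 0" "d \<in> {a..b}"
  shows "g d \<le> L * (b - d)"
proof -
  obtain D where D: "\<And>t. t \<in> {a..b} \<Longrightarrow> (g has_real_derivative D t) (at t within {a..b}) \<and> \<bar>D t\<bar> < L"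
    using assms(1) by metis
  have "norm (g d - g b) \<le> L * norm (d - b)"
    by (rule field_differentiable_bound[of "{a..b}" g D]) (use D assms(3) in \<open>auto intro: less_imp_le\<close>)
  then show ?thesis
    using assms(2,3) by simp
qed

lemma le_two_power_nat_ceiling_log: "x > 0 \<Longrightarrow> x \<le> 2 ^ nat \<lceil>log 2 x\<rceil>"
proof -
  assume "x > 0"
  have "log 2 x \<le> real (nat \<lceil>log 2 x\<rceil>)" by linarith
  then have "2 powr log 2 x \<le> 2 powr real (nat \<lceil>log 2 x\<rceil>)" by simp
  with \<open>x > 0\<close> show ?thesis by (simp add: powr_realpow)
qed

text \<open>
  The ceiling in the hypothesis of the theorem may be negative; since \<open>ln\<close> is even with
  \<open>ln 0 = 0\<close> in HOL, the logarithm there is still bounded below by that of the clipped value.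
\<close>
lemma ln_nat_plus_one_le: "ln (real (nat k) + 1) \<le> ln (real_of_int k + 1)"
proof (cases "k \<ge> 0")
  case False
  then have "ln (real_of_int k + 1) = ln (- real_of_int k - 1)"
    using ln_minus[of "real_of_int k + 1"] by simp
  then show ?thesis
    using False by (cases "k = -1") (auto intro!: ln_ge_zero)
qed simp

lemma union_bound_le_inverse_power:
  fixes N x \<epsilon> :: real
  assumes "N \<ge> 1" "x \<ge> 1" "ln N + real r * ln x \<le> x * \<epsilon>\<^sup>2"
  shows "N * (2 * exp (- 2 * x * \<epsilon>\<^sup>2)) \<le> 2 / x ^ r"
proof -
  define y where "y = N * x ^ r"
  have "y > 0" "x ^ r \<le> y"
    using assms(1,2) by (simp_all add: y_def)
  have "exp (- 2 * x * \<epsilon>\<^sup>2) \<le> exp (- (2 * ln y))"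
    using assms by (simp add: y_def ln_mult ln_realpow)
  also have "\<dots> = 1 / y\<^sup>2"
    using \<open>y > 0\<close> exp_of_nat_mult[of 2 "ln y"] by (simp add: exp_minus inverse_eq_divide)
  finally have "N * (2 * exp (- 2 * x * \<epsilon>\<^sup>2)) \<le> N * (2 * (1 / y\<^sup>2))"
    using assms(1) by (intro mult_left_mono) simp_all
  also have "\<dots> = 2 / (x ^ r * y)"
    using \<open>y > 0\<close> assms(1) by (simp add: y_def power2_eq_square field_simps)
  also have "\<dots> \<le> 2 / x ^ r"
  proof (rule divide_left_mono)
    have "1 \<le> y" using \<open>x ^ r \<le> y\<close> assms(2) one_le_power order_trans by blast
    then show "x ^ r \<le> x ^ r * y" using assms(2) by simp
  qed (use \<open>y > 0\<close> assms(2) in simp_all)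
  finally show ?thesis .
qed

lemma bisect_seq_gap: "\<Delta> - bisect_seq \<Delta> k = (\<Delta> + 1) / 2 ^ k"
  by (induction k) (auto simp: field_simps)

lemma bisect_seq_mem:
  assumes "\<Delta> \<ge> -1"
  shows "bisect_seq \<Delta> k \<in> {-1..\<Delta>}"
proof -
  have "0 \<le> (\<Delta> + 1) / 2 ^ k" "(\<Delta> + 1) / 2 ^ k \<le> \<Delta> + 1"
    using assms divide_left_mono[of 1 "2 ^ k" "\<Delta> + 1"] by simp_all
  then show ?thesis
    using bisect_seq_gap[of \<Delta> k] by simp
qed

lemma bisect_seq_depth_le_half:
  fixes g :: "real \<Rightarrow> real"
  assumes "\<forall>t\<in>{-1..\<Delta>}. \<exists>D. (g has_real_derivative D) (at t within {-1..\<Delta>}) \<and> \<bar>D\<bar> < L"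
    and "g \<Delta> = 0" "\<Delta> > -1" "L > 0" "\<alpha> > 0"
  shows "g (bisect_seq \<Delta> (nat \<lceil>log 2 (2 * L * (\<Delta> + 1) / \<alpha>)\<rceil>)) \<le> \<alpha> / 2"
proof -
  define K where "K = nat \<lceil>log 2 (2 * L * (\<Delta> + 1) / \<alpha>)\<rceil>"
  have "g (bisect_seq \<Delta> K) \<le> L * (\<Delta> - bisect_seq \<Delta> K)"
    by (rule deriv_bound_le_dist_to_root[OF assms(1,2) bisect_seq_mem]) (use assms(3) in simp)
  also have "\<dots> = L * (\<Delta> + 1) / 2 ^ K"
    by (simp add: bisect_seq_gap)
  also have "\<dots> \<le> \<alpha> / 2"
  proof -
    have "2 * L * (\<Delta> + 1) / \<alpha> \<le> 2 ^ K"
      unfolding K_def by (rule le_two_power_nat_ceiling_log) (use assms(3-5) in simp)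
    then show ?thesis
      using assms(5) by (simp add: field_simps)
  qed
  finally show ?thesis
    unfolding K_def .
qed

lemma procedure_returns_if_uniform_deviation:
  assumes "\<forall>k\<le>K. \<bar>emp_miscov mu v n \<omega> (bisect_seq \<Delta> k) - g (bisect_seq \<Delta> k)\<bar> < \<alpha> / 4"
    and "g (bisect_seq \<Delta> K) \<le> \<alpha> / 2"
  shows "\<exists>d. procedure_returns mu v \<Delta> \<alpha> n \<omega> d \<and> g d \<le> \<alpha>"
proof -
  let ?stops = "\<lambda>k. emp_miscov mu v n \<omega> (bisect_seq \<Delta> k) \<le> 3 / 4 * \<alpha>"
  define k where "k = (LEAST k. ?stops k)"
  have "?stops K"
    using assms(1)[rule_format, OF order_refl] assms(2) by linarith
  then have "?stops k" "k \<le> K" "\<forall>i<k. \<not> ?stops i"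
    unfolding k_def by (auto intro: LeastI Least_le dest: not_less_Least)
  moreover have "g (bisect_seq \<Delta> k) \<le> \<alpha>"
    using assms(1)[rule_format, OF \<open>k \<le> K\<close>] \<open>?stops k\<close> by linarith
  ultimately show ?thesis
    unfolding procedure_returns_def by (auto simp: not_le)
qed

lemma pred_mem_PI:
  assumes "sets M = sets (X \<Otimes>\<^sub>M borel)" "mu \<in> borel_measurable X" "v \<in> borel_measurable X"
  shows "Measurable.pred M (\<lambda>p. snd p \<in> PI mu v (fst p) d)"
proof -
  have "Measurable.pred (X \<Otimes>\<^sub>M borel) (\<lambda>p. snd p \<in> PI mu v (fst p) d)"
    unfolding PI_def atLeastAtMost_iff using assms(2,3) by measurable
  then show ?thesis
    using assms(1) by (simp add: measurable_cong_sets)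
qed

context
  fixes X :: "'a measure" and M :: "('a \<times> real) measure" and mu v :: "'a \<Rightarrow> real"
  assumes prob_M: "prob_space M"
    and sets_M: "sets M = sets (X \<Otimes>\<^sub>M borel)"
    and mu_measurable: "mu \<in> borel_measurable X" and v_measurable: "v \<in> borel_measurable X"
begin

private lemmas pred_mem_PI' [measurable] = pred_mem_PI[OF sets_M mu_measurable v_measurable]

lemma coverage_eq_one_minus_miscov:
  "measure M {p \<in> space M. snd p \<in> PI mu v (fst p) d} = 1 - miscov M mu v d"
proof -
  interpret prob_space M by (fact prob_M)
  have "{p \<in> space M. snd p \<in> PI mu v (fst p) d} = space M - {p \<in> space M. snd p \<notin> PI mu v (fst p) d}"
    by auto
  then show ?thesis
    by (simp add: miscov_def prob_compl)
qed

lemma emp_miscov_measurable [measurable]: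
  "(\<lambda>\<omega>. emp_miscov mu v n \<omega> d) \<in> borel_measurable (PiM {..<n} (\<lambda>_. M))"
  unfolding emp_miscov_def by measurable

lemma emp_miscov_deviation_prob:
  assumes "n \<ge> 1" "\<epsilon> \<ge> 0"
  shows "measure (PiM {..<n} (\<lambda>_. M))
           {\<omega> \<in> space (PiM {..<n} (\<lambda>_. M)). \<epsilon> \<le> \<bar>emp_miscov mu v n \<omega> d - miscov M mu v d\<bar>}
         \<le> 2 * exp (- 2 * real n * \<epsilon>\<^sup>2)"
proof -
  interpret prob_space M by (fact prob_M)
  let ?miss = "\<lambda>p. if snd p \<notin> PI mu v (fst p) d then 1 else 0 :: real"
  have "integral\<^sup>L M ?miss = integral\<^sup>L M (indicator {p \<in> space M. snd p \<notin> PI mu v (fst p) d})"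
    by (intro Bochner_Integration.integral_cong) (auto simp: indicator_def)
  also have "\<dots> = miscov M mu v d"
    by (simp add: miscov_def Int_absorb2)
  finally show ?thesis
    using hoeffding_PiM_mean[OF prob_M assms(1), of ?miss 0 1 \<epsilon>] assms(2)
    by (simp add: emp_miscov_def)
qed

lemma emp_miscov_uniform_deviation_prob:
  assumes "n \<ge> 1" "\<epsilon> \<ge> 0"
  shows "measure (PiM {..<n} (\<lambda>_. M))
           {\<omega> \<in> space (PiM {..<n} (\<lambda>_. M)).
              \<exists>k\<le>K. \<epsilon> \<le> \<bar>emp_miscov mu v n \<omega> (d k) - miscov M mu v (d k)\<bar>}
         \<le> (real K + 1) * (2 * exp (- 2 * real n * \<epsilon>\<^sup>2))"
proof -
  let ?P = "PiM {..<n} (\<lambda>_. M)"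
  let ?E = "\<lambda>k. {\<omega> \<in> space ?P. \<epsilon> \<le> \<bar>emp_miscov mu v n \<omega> (d k) - miscov M mu v (d k)\<bar>}"
  interpret P: prob_space ?P by (rule prob_space_PiM) (use prob_M in simp)
  have "measure ?P (\<Union>k\<le>K. ?E k) \<le> (\<Sum>k\<le>K. measure ?P (?E k))"
    by (rule P.finite_measure_subadditive_finite) auto
  also have "\<dots> \<le> (\<Sum>k\<le>K. 2 * exp (- 2 * real n * \<epsilon>\<^sup>2))"
    by (intro sum_mono emp_miscov_deviation_prob assms)
  also have "(\<Union>k\<le>K. ?E k) = {\<omega> \<in> space ?P.
      \<exists>k\<le>K. \<epsilon> \<le> \<bar>emp_miscov mu v n \<omega> (d k) - miscov M mu v (d k)\<bar>}"
    by auto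
  finally show ?thesis
    by (simp add: algebra_simps)
qed

lemma procedure_event_measurable:
  "{\<omega> \<in> space (PiM {..<n} (\<lambda>_. M)). \<exists>d. procedure_returns mu v \<Delta> \<alpha> n \<omega> d \<and> Q d}
     \<in> sets (PiM {..<n} (\<lambda>_. M))"
proof -
  have "{\<omega> \<in> space (PiM {..<n} (\<lambda>_. M)). \<exists>d. procedure_returns mu v \<Delta> \<alpha> n \<omega> d \<and> Q d}
      = {\<omega> \<in> space (PiM {..<n} (\<lambda>_. M)). \<exists>k. emp_miscov mu v n \<omega> (bisect_seq \<Delta> k) \<le> 3 / 4 * \<alpha>
           \<and> (\<forall>i<k. emp_miscov mu v n \<omega> (bisect_seq \<Delta> i) > 3 / 4 * \<alpha>) \<and> Q (bisect_seq \<Delta> k)}"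
    unfolding procedure_returns_def by blast
  also have "\<dots> \<in> sets (PiM {..<n} (\<lambda>_. M))"
    by measurable
  finally show ?thesis .
qed

lemma procedure_coverage_prob_ge:
  assumes "n \<ge> 1" "\<alpha> \<ge> 0" "miscov M mu v (bisect_seq \<Delta> K) \<le> \<alpha> / 2"
  shows "measure (PiM {..<n} (\<lambda>_. M))
           {\<omega> \<in> space (PiM {..<n} (\<lambda>_. M)).
              \<exists>d. procedure_returns mu v \<Delta> \<alpha> n \<omega> d
                 \<and> measure M {p \<in> space M. snd p \<in> PI mu v (fst p) d} \<ge> 1 - \<alpha>}
         \<ge> 1 - (real K + 1) * (2 * exp (- 2 * real n * (\<alpha> / 4)\<^sup>2))"
    (is "measure ?P ?Good \<ge> _")
proof -
  interpret P: prob_space ?P by (rule prob_space_PiM) (use prob_M in simp)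
  define Bad where "Bad = {\<omega> \<in> space ?P. \<exists>k\<le>K.
      \<alpha> / 4 \<le> \<bar>emp_miscov mu v n \<omega> (bisect_seq \<Delta> k) - miscov M mu v (bisect_seq \<Delta> k)\<bar>}"
  have "space ?P - Bad \<subseteq> ?Good"
  proof
    fix \<omega> assume \<omega>: "\<omega> \<in> space ?P - Bad"
    then have "\<forall>k\<le>K. \<bar>emp_miscov mu v n \<omega> (bisect_seq \<Delta> k) - miscov M mu v (bisect_seq \<Delta> k)\<bar> < \<alpha> / 4"
      unfolding Bad_def by (metis (mono_tags, lifting) Diff_iff mem_Collect_eq not_le)
    then obtain d where "procedure_returns mu v \<Delta> \<alpha> n \<omega> d" "miscov M mu v d \<le> \<alpha>"
      using procedure_returns_if_uniform_deviation assms(3) by blast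
    then show "\<omega> \<in> ?Good"
      using \<omega> by (auto simp: coverage_eq_one_minus_miscov)
  qed
  have "1 - (real K + 1) * (2 * exp (- 2 * real n * (\<alpha> / 4)\<^sup>2)) \<le> 1 - P.prob Bad"
    using emp_miscov_uniform_deviation_prob[OF assms(1), of "\<alpha> / 4" K "bisect_seq \<Delta>"] assms(2)
    unfolding Bad_def by simp
  also have "\<dots> = P.prob (space ?P - Bad)"
    by (rule P.prob_compl[symmetric]) (simp add: Bad_def)
  also have "\<dots> \<le> P.prob ?Good"
    using \<open>space ?P - Bad \<subseteq> ?Good\<close> procedure_event_measurable by (rule P.finite_measure_mono)
  finally show ?thesis .
qed

end

theorem lemma1:
  fixes X :: "'a measure" and M :: "('a \<times> real) measure"
    and mu v :: "'a \<Rightarrow> real" and \<Delta> L \<alpha> :: real and n :: nat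
  assumes "prob_space M"
    and "sets M = sets (X \<Otimes>\<^sub>M borel)"
    and "mu \<in> borel_measurable X" and "v \<in> borel_measurable X"
    and "\<forall>x\<in>space X. v x \<ge> 0"
    and "\<Delta> > 0" and "L > 0"
    and "miscov M mu v \<Delta> = 0"
    and "\<forall>\<delta>\<in>{-1..\<Delta>}. \<exists>D. (miscov M mu v has_real_derivative D) (at \<delta> within {-1..\<Delta>}) \<and> \<bar>D\<bar> < L"
    and "0 < \<alpha>" and "\<alpha> < 1"
    and "n \<ge> 1"
    and "sqrt ((ln (real_of_int \<lceil>log 2 (2 * L * (\<Delta> + 1) / \<alpha>)\<rceil> + 1) + 10 * ln (real n)) / real n)
           \<le> \<alpha> / 4"
  shows "measure (PiM {..<n} (\<lambda>_. M))
           {\<omega> \<in> space (PiM {..<n} (\<lambda>_. M)).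
              \<exists>d. procedure_returns mu v \<Delta> \<alpha> n \<omega> d
                 \<and> measure M {p \<in> space M. snd p \<in> PI mu v (fst p) d} \<ge> 1 - \<alpha>}
         \<ge> 1 - 2 / real n ^ 10"
proof -
  define K where "K = nat \<lceil>log 2 (2 * L * (\<Delta> + 1) / \<alpha>)\<rceil>"
  have "(ln (real_of_int \<lceil>log 2 (2 * L * (\<Delta> + 1) / \<alpha>)\<rceil> + 1) + 10 * ln (real n)) / real n
      \<le> (\<alpha> / 4)\<^sup>2"
    using assms(13) by (rule sqrt_le_D)
  then have "ln (real K + 1) + real 10 * ln (real n) \<le> real n * (\<alpha> / 4)\<^sup>2"
    using assms(12) ln_nat_plus_one_le[of "\<lceil>log 2 (2 * L * (\<Delta> + 1) / \<alpha>)\<rceil>"]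
    by (simp add: K_def field_simps)
  then have "(real K + 1) * (2 * exp (- 2 * real n * (\<alpha> / 4)\<^sup>2)) \<le> 2 / real n ^ 10"
    using assms(12) by (intro union_bound_le_inverse_power) simp_all
  moreover have "miscov M mu v (bisect_seq \<Delta> K) \<le> \<alpha> / 2"
    unfolding K_def using assms(6-10) by (intro bisect_seq_depth_le_half) simp_all
  ultimately show ?thesis
    using procedure_coverage_prob_ge[OF assms(1-4,12), of \<alpha> \<Delta> K] assms(10) by simp
qed

end
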